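(* Let $\mathfrak R\subseteq\mathfrak R(d_*,L_*,s_* )$ be a cubical iterated graph system with replacement graphs $G_m$, and let $n\in\mathbb N$. For every $\tilde w\in W_\#$ there is a folding of $G_{n+|\tilde w|}$ onto $\tilde w\cdot W_n:=\{\tilde wu: u\in W_n\}$.
   Context: Graphs: $(V,E)$ with $V$ finite non-empty, $E\subseteq V\times V$, $(x,y)\in E\Rightarrow(y,x)\notin E$; $\{x,y\}\in E$ means either orientation. A mapping between graphs $\varphi:G\to G'$ is a map on vertices such that each edge $\{x,y\}$ has $\varphi(x)=\varphi(y)$ or $\{\varphi(x),\varphi(y)\}\in E(G')$. For $U\subseteq V(G)$, $\langle U\rangle$ is the induced subgraph; a folding of $G$ onto $U$ is a mapping between graphs $\varphi:G\to\langle U\rangle$ with $\varphi|_U=\mathrm{id}_U$. An iterated graph system (IGS) $\mathfrak R$ consists of a connected graph $G_1=(S,E)$, a finite set $\mathcal T$ of types, a surjective typing $\mathfrak t:E\to\mathcal T$ and non-empty gluing rules $I_t\subseteq S\times S$ ($t\in\mathcal T$). With $W_m=S^m$, $W_\#=\bigcup_{m\ge1}W_m$ and $[w]_k=w_1\cdots w_k$, the replacement graphs $G_m=(W_m,E_m)$ and their typings are defined recursively: $(w,v)\in E_{m+1}$ iff either (1) $[w]_m=[v]_m$ and $(w_{m+1},v_{m+1})\in E$ (type $\mathfrak t(w_{m+1},v_{m+1})$), or (2) $([w]_m,[v]_m)\in E_m$ and $(w_{m+1},v_{m+1})\in I_{\mathfrak t([w]_m,[v]_m)}$ (type $\mathfrak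 t([w]_m,[v]_m)$). A mapping of IGS $\varphi:\mathfrak R\to\mathfrak R'$ is a graph mapping $G_1\to G_1'$ such that (i) if $\varphi(w_1)=\varphi(v_1)$ for an edge $\{w_1,v_1\}$ of type $t$ then $\varphi(w_2)=\varphi(v_2)$ for all $(w_2,v_2)\in I_t$; (ii) if $(w_1,v_1)\in E$ has type $t$ and $(\varphi(w_1),\varphi(v_1))\in E'$ has type $t'$ then $(\varphi(w_2),\varphi(v_2))\in I'_{t'}$ for all $(w_2,v_2)\in I_t$; (iii) if $(w_1,v_1)\in E$ has type $t$ and $(\varphi(v_1),\varphi(w_1))\in E'$ has type $t'$ then $(\varphi(v_2),\varphi(w_2))\in I'_{t'}$ for all $(w_2,v_2)\in I_t$. An isomorphism of IGS is a graph isomorphism such that it and its inverse are mappings of IGS. $\mathfrak R$ is a sub-system of $\mathfrak R'$ ($\mathfrak R\subseteq\mathfrak R'$) if $S\subseteq S'$, $\mathcal T=\mathcal T'$ and the inclusion $S\to S'$ is a mapping of IGS. Cubical IGS: for integers $d_*\ge1$, $s_*\ge1$, $L_*\ge3$, let $\mathfrak R(d_*,L_*,s_* )$ have symbols $S(d_*,L_*,s_* )=\{1,\dots,L_*\}^{d_*}\times\{\underline1,\dots,\underline{s_*}\}$, coordinate functions $c_i(w)$ ($i=1,\dots,d_*$) and sheet $s(w)$; types $\{t_1,\dots,t_{d_*}\}$; $(w,v)$ is an edge of type $t_j$ iff $c_i(v)=c_i(w)$ for $i\neq j$ and $c_j(v)=c_j(w)+1$; $(w,v)\in I_{t_j}$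 iff $c_i(w)=c_i(v)$ for $i\ne j$, $(c_j(w),c_j(v))=(L_*,1)$ and $s(w)=s(v)$. Define maps on $S(d_*,L_*,s_* )$, all preserving the sheet $s$ and all coordinates other than those listed: $\eta_j$: $c_j\mapsto L_*+1-c_j$; for $j\neq k$, $\alpha^+_{j,k}$ swaps $c_j$ and $c_k$; $\alpha^-_{j,k}$ sets $c_k(\alpha(w))=L_*+1-c_j(w)$ and $c_j(\alpha(w))=L_*+1-c_k(w)$. Let $\mathcal G(d_*,L_*,s_* )$ be the set of all these maps. A cubical IGS is a sub-system $\mathfrak R\subseteq\mathfrak R(d_*,L_*,s_* )$ such that: (C1) for each $j$, every $w\in S(d_*,L_*,s_* )$ with $c_i(w)\in\{1,L_*\}$ for all $i\neq j$ and $s(w)=\underline1$ (call this condition $(\ast_j)$) lies in $S(\mathfrak R)$; (C2) if $w,v$ satisfy $(\ast_j)$ for the same $j$, $c_i(v)=c_i(w)$ for $i\neq j$ and $c_j(v)=c_j(w)+1$, then $(w,v)\in E(\mathfrak R)$; (C3) if $w,v$ satisfy $(\ast_j)$ for the same $j$, $c_i(w)=c_i(v)$ for $i\neq j$ and $(c_j(w),c_j(v))=(L_*,1)$, then $(w,v)\in I_{t_j}(\mathfrak R)$; (C4) for every $\alpha\in\mathcal G(d_*,L_*,s_* )$ the restriction $\alpha|_{S(\mathfrak R)}$ is an isomorphism of IGS $\mathfrak R\to\mathfrak R$. *)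

theory Defs
  imports Main
begin

text \<open>A graph is given by a vertex set V and an edge set E of ordered pairs;
  an unordered edge {x,y} means either orientation.\<close>

definition graph_mapping ::
  "'a set \<Rightarrow> ('a \<times> 'a) set \<Rightarrow> 'b set \<Rightarrow> ('b \<times> 'b) set \<Rightarrow> ('a \<Rightarrow> 'b) \<Rightarrow> bool" where
  "graph_mapping V E V' E' \<phi> \<longleftrightarrow>
     \<phi> ` V \<subseteq> V' \<and>
     (\<forall>(x,y)\<in>E. \<phi> x = \<phi> y \<or> (\<phi> x, \<phi> y) \<in> E' \<or> (\<phi> y, \<phi> x) \<in> E')"

definition folding ::
  "'a set \<Rightarrow> ('a \<times> 'a) set \<Rightarrow> 'a set \<Rightarrow> ('a \<Rightarrow> 'a) \<Rightarrow> bool" where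
  "folding V E U \<phi> \<longleftrightarrow>
     U \<subseteq> V \<and> graph_mapping V E U (E \<inter> (U \<times> U)) \<phi> \<and> (\<forall>x\<in>U. \<phi> x = x)"

record ('a, 't) igs =
  Sym  :: "'a set"
  Edg  :: "('a \<times> 'a) set"
  Typ  :: "'t set"
  Typing :: "'a \<times> 'a \<Rightarrow> 't"
  Glue :: "'t \<Rightarrow> ('a \<times> 'a) set"

definition igs_wf :: "('a, 't) igs \<Rightarrow> bool" where
  "igs_wf R \<longleftrightarrow>
     finite (Sym R) \<and> Sym R \<noteq> {} \<and>
     Edg R \<subseteq> Sym R \<times> Sym R \<and>
     (\<forall>(x,y)\<in>Edg R. (y,x) \<notin> Edg R) \<and>
     (\<forall>x\<in>Sym R. \<forall>y\<in>Sym R. (x,y) \<in> (Edg R \<union> (Edg R)\<inverse>)\<^sup>*) \<and>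
     finite (Typ R) \<and>
     Typing R ` Edg R = Typ R \<and>
     (\<forall>t\<in>Typ R. Glue R t \<noteq> {} \<and> Glue R t \<subseteq> Sym R \<times> Sym R)"

text \<open>Words: W_m = S^m as lists of length m; [w]_m = take m w; the (m+1)-st letter
  of a word of length m+1 is its last letter.
  gm_typ R m w v = Some t iff (w,v) is an edge of G_m of type t.\<close>

fun gm_typ :: "('a, 't) igs \<Rightarrow> nat \<Rightarrow> 'a list \<Rightarrow> 'a list \<Rightarrow> 't option" where
  "gm_typ R 0 w v = None"
| "gm_typ R (Suc m) w v =
     (if length w \<noteq> Suc m \<or> length v \<noteq> Suc m then None
      else if take m w = take m v \<and> (last w, last v) \<in> Edg R
        then Some (Typing R (last w, last v))
      else (case gm_typ R m (take m w) (take m v) of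
              None \<Rightarrow> None
            | Some t \<Rightarrow> if (last w, last v) \<in> Glue R t then Some t else None))"

definition words :: "('a, 't) igs \<Rightarrow> nat \<Rightarrow> 'a list set" where
  "words R m = {w. length w = m \<and> set w \<subseteq> Sym R}"

definition words_all :: "('a, 't) igs \<Rightarrow> 'a list set" where
  "words_all R = (\<Union>m\<in>{1..}. words R m)"

definition gm_edges :: "('a, 't) igs \<Rightarrow> nat \<Rightarrow> ('a list \<times> 'a list) set" where
  "gm_edges R m = {(w,v). gm_typ R m w v \<noteq> None}"

definition igs_mapping :: "('a, 't) igs \<Rightarrow> ('b, 's) igs \<Rightarrow> ('a \<Rightarrow> 'b) \<Rightarrow> bool" where
  "igs_mapping R R' \<phi> \<longleftrightarrow>
     graph_mapping (Sym R) (Edg R) (Sym R') (Edg R') \<phi> \<and>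
     (\<forall>(w1,v1)\<in>Edg R. \<phi> w1 = \<phi> v1 \<longrightarrow>
        (\<forall>(w2,v2)\<in>Glue R (Typing R (w1,v1)). \<phi> w2 = \<phi> v2)) \<and>
     (\<forall>(w1,v1)\<in>Edg R. (\<phi> w1, \<phi> v1) \<in> Edg R' \<longrightarrow>
        (\<forall>(w2,v2)\<in>Glue R (Typing R (w1,v1)).
           (\<phi> w2, \<phi> v2) \<in> Glue R' (Typing R' (\<phi> w1, \<phi> v1)))) \<and>
     (\<forall>(w1,v1)\<in>Edg R. (\<phi> v1, \<phi> w1) \<in> Edg R' \<longrightarrow>
        (\<forall>(w2,v2)\<in>Glue R (Typing R (w1,v1)).
           (\<phi> v2, \<phi> w2) \<in> Glue R' (Typing R' (\<phi> v1, \<phi> w1))))"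

definition igs_iso :: "('a, 't) igs \<Rightarrow> ('b, 's) igs \<Rightarrow> ('a \<Rightarrow> 'b) \<Rightarrow> bool" where
  "igs_iso R R' \<phi> \<longleftrightarrow>
     bij_betw \<phi> (Sym R) (Sym R') \<and> igs_mapping R R' \<phi> \<and>
     igs_mapping R' R (the_inv_into (Sym R) \<phi>)"

definition sub_system :: "('a, 't) igs \<Rightarrow> ('a, 't) igs \<Rightarrow> bool" where
  "sub_system R R' \<longleftrightarrow> Sym R \<subseteq> Sym R' \<and> Typ R = Typ R' \<and> igs_mapping R R' id"

text \<open>A symbol is a pair (c, s) with c a coordinate list of length d (c!(j-1) is the
  paper's c_j) with entries in {1..L}, and sheet s in {1..s_*}.
  The type t_j of the paper is represented by the number j-1 < d.\<close>

type_synonym csym = "nat list \<times> nat"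

definition cube_sym :: "nat \<Rightarrow> nat \<Rightarrow> nat \<Rightarrow> csym set" where
  "cube_sym d L s = {(c, \<sigma>). length c = d \<and> (\<forall>i<d. 1 \<le> c!i \<and> c!i \<le> L) \<and> 1 \<le> \<sigma> \<and> \<sigma> \<le> s}"

definition cube_igs :: "nat \<Rightarrow> nat \<Rightarrow> nat \<Rightarrow> (csym, nat) igs" where
  "cube_igs d L s =
    \<lparr> Sym = cube_sym d L s,
      Edg = {(w,v). w \<in> cube_sym d L s \<and> v \<in> cube_sym d L s \<and>
               (\<exists>j<d. (\<forall>i<d. i \<noteq> j \<longrightarrow> fst v ! i = fst w ! i) \<and> fst v ! j = fst w ! j + 1)},
      Typ = {..<d},
      Typing = (\<lambda>(w,v). THE j. j < d \<and> (\<forall>i<d. i \<noteq> j \<longrightarrow> fst v ! i = fst w ! i) \<and>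
                                 fst v ! j = fst w ! j + 1),
      Glue = (\<lambda>j. {(w,v). w \<in> cube_sym d L s \<and> v \<in> cube_sym d L s \<and>
               (\<forall>i<d. i \<noteq> j \<longrightarrow> fst w ! i = fst v ! i) \<and>
               fst w ! j = L \<and> fst v ! j = 1 \<and> snd w = snd v}) \<rparr>"

definition eta_map :: "nat \<Rightarrow> nat \<Rightarrow> csym \<Rightarrow> csym" where
  "eta_map L j = (\<lambda>(c, \<sigma>). (c[j := L + 1 - c!j], \<sigma>))"

definition alpha_plus :: "nat \<Rightarrow> nat \<Rightarrow> csym \<Rightarrow> csym" where
  "alpha_plus j k = (\<lambda>(c, \<sigma>). (c[j := c!k, k := c!j], \<sigma>))"

definition alpha_minus :: "nat \<Rightarrow> nat \<Rightarrow> nat \<Rightarrow> csym \<Rightarrow> csym" where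
  "alpha_minus L j k = (\<lambda>(c, \<sigma>). (c[k := L + 1 - c!j, j := L + 1 - c!k], \<sigma>))"

definition cube_group :: "nat \<Rightarrow> nat \<Rightarrow> (csym \<Rightarrow> csym) set" where
  "cube_group d L =
     {eta_map L j | j. j < d} \<union>
     {alpha_plus j k | j k. j < d \<and> k < d \<and> j \<noteq> k} \<union>
     {alpha_minus L j k | j k. j < d \<and> k < d \<and> j \<noteq> k}"

text \<open>Condition (*_j) (with j 0-based).\<close>

definition star_cond :: "nat \<Rightarrow> nat \<Rightarrow> nat \<Rightarrow> nat \<Rightarrow> csym \<Rightarrow> bool" where
  "star_cond d L s j w \<longleftrightarrow>
     w \<in> cube_sym d L s \<and> (\<forall>i<d. i \<noteq> j \<longrightarrow> fst w ! i \<in> {1, L}) \<and> snd w = 1"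

definition cubical_igs :: "nat \<Rightarrow> nat \<Rightarrow> nat \<Rightarrow> (csym, nat) igs \<Rightarrow> bool" where
  "cubical_igs d L s R \<longleftrightarrow>
     igs_wf R \<and> sub_system R (cube_igs d L s) \<and>
     (\<forall>j<d. \<forall>w. star_cond d L s j w \<longrightarrow> w \<in> Sym R) \<and>
     (\<forall>j<d. \<forall>w v. star_cond d L s j w \<and> star_cond d L s j v \<and>
        (\<forall>i<d. i \<noteq> j \<longrightarrow> fst v ! i = fst w ! i) \<and> fst v ! j = fst w ! j + 1
        \<longrightarrow> (w,v) \<in> Edg R) \<and>
     (\<forall>j<d. \<forall>w v. star_cond d L s j w \<and> star_cond d L s j v \<and>
        (\<forall>i<d. i \<noteq> j \<longrightarrow> fst w ! i = fst v ! i) \<and> fst w ! j = L \<and> fst v ! j = 1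
        \<longrightarrow> (w,v) \<in> Glue R j) \<and>
     (\<forall>\<alpha>\<in>cube_group d L. igs_iso R R \<alpha>)"

end

(* Identify the prefixes of length m = |w| with the cells of a d-dimensional grid of side L^m,
   the j-th coordinate of a cell being its prefix read as a base-L numeral in the digits c_j - 1.
   An edge of G_(m+n) either stays inside one cell, or joins two cells that are neighbours in some
   direction j, and then it glues the face c_j = L of one cell letterwise to the face c_j = 1 of
   the other. Fold the grid like a paper map: reflect every cell, letter by letter, in those
   directions in which it lies an odd number of steps away from the cell w. Inside a cell such a
   reflection is a product of the symmetries eta_j and hence a graph mapping of G_n; the
   reflections of two neighbouring cells differ exactly in direction j, which sends glued letters
   to the same symbol. *)

theory Submission
  imports Defs
begin

section \<open>Replacement graphs\<close>

lemma igs_wf_irrefl: "igs_wf R \<Longrightarrow> irrefl (Edg R)"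
  unfolding igs_wf_def irrefl_def by fast

lemma gm_typ_length: "gm_typ R m u v = Some t \<Longrightarrow> length u = m \<and> length v = m"
  by (cases m) (auto split: if_splits)

lemma gm_typ_diag: "irrefl (Edg R) \<Longrightarrow> gm_typ R m p p = None"
  by (induction m arbitrary: p) (auto simp: irrefl_def)

lemma gm_typ_snoc:
  assumes "irrefl (Edg R)"
  shows "gm_typ R (Suc m) (p @ [a]) (q @ [b]) = Some t \<longleftrightarrow>
    length p = m \<and> length q = m \<and>
    (p = q \<and> (a, b) \<in> Edg R \<and> t = Typing R (a, b) \<or>
     gm_typ R m p q = Some t \<and> (a, b) \<in> Glue R t)"
  using gm_typ_diag[OF assms, of m p] by (auto split: option.splits)

declare gm_typ.simps(2) [simp del]

lemma gm_typ_snoc_edge: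
  "length p = m \<Longrightarrow> (a, b) \<in> Edg R \<Longrightarrow> gm_typ R (Suc m) (p @ [a]) (p @ [b]) = Some (Typing R (a, b))"
  by (simp add: gm_typ.simps)

lemma gm_typ_snoc_glue:
  assumes "irrefl (Edg R)" and "gm_typ R m p q = Some t" and "(a, b) \<in> Glue R t"
  shows "gm_typ R (Suc m) (p @ [a]) (q @ [b]) = Some t"
  using assms(2,3) gm_typ_length[OF assms(2)] by (simp add: gm_typ_snoc[OF assms(1)])

lemma gm_typ_SucE:
  assumes "gm_typ R (Suc m) u v = Some t"
  obtains (edge) p a b where "u = p @ [a]" "v = p @ [b]" "length p = m"
      "(a, b) \<in> Edg R" "t = Typing R (a, b)"
    | (glue) p a q b where "u = p @ [a]" "v = q @ [b]"
      "gm_typ R m p q = Some t" "(a, b) \<in> Glue R t"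
proof -
  obtain p a q b where uv: "u = p @ [a]" "v = q @ [b]"
    using gm_typ_length[OF assms] by (metis rev_exhaust length_0_conv nat.distinct(1))
  with assms that show thesis
    by (auto simp: gm_typ.simps split: if_splits option.splits)
qed

lemma gm_typ_append:
  assumes "irrefl (Edg R)" and "length p = m" "length q = m" and "length x = length y"
  shows "gm_typ R (m + length x) (p @ x) (q @ y) = Some t \<longleftrightarrow>
    p = q \<and> gm_typ R (length x) x y = Some t \<or>
    gm_typ R m p q = Some t \<and> list_all2 (\<lambda>a b. (a, b) \<in> Glue R t) x y"
  using assms(4)
proof (induction x y rule: rev_induct2)
  case (4 a x b y)
  have "gm_typ R (m + length (x @ [a])) (p @ x @ [a]) (q @ y @ [b]) = Some t \<longleftrightarrow>
      p = q \<and> x = y \<and> (a, b) \<in> Edg R \<and> t = Typing R (a, b) \<or>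
      gm_typ R (m + length x) (p @ x) (q @ y) = Some t \<and> (a, b) \<in> Glue R t"
    using gm_typ_snoc[OF assms(1), of "m + length x" "p @ x" a "q @ y" b] 4 assms(2,3)
    by simp
  moreover have "gm_typ R (length (x @ [a])) (x @ [a]) (y @ [b]) = Some t \<longleftrightarrow>
      x = y \<and> (a, b) \<in> Edg R \<and> t = Typing R (a, b) \<or>
      gm_typ R (length x) x y = Some t \<and> (a, b) \<in> Glue R t"
    using gm_typ_snoc[OF assms(1), of "length x" x a y b] 4 by simp
  ultimately show ?case
    using 4 by (simp add: list_all2_append) blast
qed simp_all

lemma gm_typ_add_cases:
  assumes "irrefl (Edg R)" and "gm_typ R (m + n) u v = Some t"
  obtains (same_cell) "take m u = take m v" "gm_typ R n (drop m u) (drop m v) = Some t"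
    | (glued) "gm_typ R m (take m u) (take m v) = Some t"
      "list_all2 (\<lambda>a b. (a, b) \<in> Glue R t) (drop m u) (drop m v)"
proof -
  have len: "length (take m u) = m" "length (take m v) = m" "length (drop m u) = n"
      "length (drop m v) = n"
    using gm_typ_length[OF assms(2)] by simp_all
  have "gm_typ R (m + n) u v = Some t \<longleftrightarrow>
      take m u = take m v \<and> gm_typ R n (drop m u) (drop m v) = Some t \<or>
      gm_typ R m (take m u) (take m v) = Some t \<and>
      list_all2 (\<lambda>a b. (a, b) \<in> Glue R t) (drop m u) (drop m v)"
    using gm_typ_append[OF assms(1) len(1,2) len(3)[folded len(4)]] unfolding len(3) by simp
  with assms(2) that show thesis
    by blast
qed

lemma gm_edges_append_prefix:
  assumes "irrefl (Edg R)" and "(x, y) \<in> gm_edges R n"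
  shows "(w @ x, w @ y) \<in> gm_edges R (length w + n)"
proof -
  from assms(2) obtain t where t: "gm_typ R n x y = Some t"
    unfolding gm_edges_def by auto
  then have "length x = n" "length y = n"
    using gm_typ_length[OF t] by simp_all
  with t have "gm_typ R (length w + n) (w @ x) (w @ y) = Some t"
    using gm_typ_append[OF assms(1) refl refl, where p = w and x = x and y = y and t = t] by simp
  then show ?thesis
    unfolding gm_edges_def by simp
qed

lemma words_snoc: "p @ [a] \<in> words R (Suc m) \<longleftrightarrow> p \<in> words R m \<and> a \<in> Sym R"
  by (auto simp: words_def)

lemma gm_typ_Some_words_iff:
  assumes "igs_wf R"
  shows "gm_typ R m u v = Some t \<Longrightarrow> t \<in> Typ R \<and> (u \<in> words R m \<longleftrightarrow> v \<in> words R m)"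
proof (induction m arbitrary: u v t)
  case (Suc m)
  from Suc.prems show ?case
  proof (cases rule: gm_typ_SucE)
    case (edge p a b)
    then show ?thesis
      using assms unfolding edge(1,2) words_snoc igs_wf_def by blast
  next
    case (glue p a q b)
    then show ?thesis
      using assms Suc.IH[OF glue(3)] unfolding glue(1,2) words_snoc igs_wf_def by blast
  qed
qed simp

lemma gm_edges_words_iff:
  "igs_wf R \<Longrightarrow> (u, v) \<in> gm_edges R m \<Longrightarrow> u \<in> words R m \<longleftrightarrow> v \<in> words R m"
  unfolding gm_edges_def using gm_typ_Some_words_iff by fast

section \<open>Mappings of IGS act letterwise on the replacement graphs\<close>

lemma graph_mapping_id: "graph_mapping V E V E id"
  unfolding graph_mapping_def by auto

lemma graph_mapping_edgeD:
  "graph_mapping V E V' E' f \<Longrightarrow> (x, y) \<in> E \<Longrightarrow> f x = f y \<or> (f x, f y) \<in> E' \<or> (f y, f x) \<in> E'"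
  unfolding graph_mapping_def by blast

lemma graph_mapping_imageD: "graph_mapping V E V' E' f \<Longrightarrow> x \<in> V \<Longrightarrow> f x \<in> V'"
  unfolding graph_mapping_def by blast

lemma graph_mapping_comp:
  assumes "graph_mapping V E V' E' f" and "graph_mapping V' E' V'' E'' g"
  shows "graph_mapping V E V'' E'' (g \<circ> f)"
  using assms unfolding graph_mapping_def by fastforce

lemma igs_mapping_edgeE:
  assumes "igs_mapping R R' \<phi>" and "(a, b) \<in> Edg R"
  obtains
    "\<phi> a = \<phi> b" "\<forall>(a', b') \<in> Glue R (Typing R (a, b)). \<phi> a' = \<phi> b'"
  | "(\<phi> a, \<phi> b) \<in> Edg R'"
    "\<forall>(a', b') \<in> Glue R (Typing R (a, b)). (\<phi> a', \<phi> b') \<in> Glue R' (Typing R' (\<phi> a, \<phi> b))"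
  | "(\<phi> b, \<phi> a) \<in> Edg R'"
    "\<forall>(a', b') \<in> Glue R (Typing R (a, b)). (\<phi> b', \<phi> a') \<in> Glue R' (Typing R' (\<phi> b, \<phi> a))"
proof -
  note mapping = assms(1)[unfolded igs_mapping_def graph_mapping_def]
  have "\<phi> a = \<phi> b \<or> (\<phi> a, \<phi> b) \<in> Edg R' \<or> (\<phi> b, \<phi> a) \<in> Edg R'"
    using mapping assms(2) by fast
  then show thesis
  proof (elim disjE)
    assume "\<phi> a = \<phi> b"
    with mapping assms(2) show thesis
      using that(1) by fast
  next
    assume "(\<phi> a, \<phi> b) \<in> Edg R'"
    with mapping assms(2) show thesis
      using that(2) by fast
  next
    assume "(\<phi> b, \<phi> a) \<in> Edg R'"
    with mapping assms(2) show thesis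
      using that(3) by fast
  qed
qed

lemma igs_mapping_gm_typ:
  assumes "irrefl (Edg R')" and "igs_mapping R R' \<phi>"
  shows "gm_typ R n x y = Some t \<Longrightarrow>
    map \<phi> x = map \<phi> y \<and> (\<forall>(a, b) \<in> Glue R t. \<phi> a = \<phi> b) \<or>
    (\<exists>t'. gm_typ R' n (map \<phi> x) (map \<phi> y) = Some t' \<and>
       (\<forall>(a, b) \<in> Glue R t. (\<phi> a, \<phi> b) \<in> Glue R' t')) \<or>
    (\<exists>t'. gm_typ R' n (map \<phi> y) (map \<phi> x) = Some t' \<and>
       (\<forall>(a, b) \<in> Glue R t. (\<phi> b, \<phi> a) \<in> Glue R' t'))"
proof (induction n arbitrary: x y t)
  case (Suc n)
  from Suc.prems show ?case
  proof (cases rule: gm_typ_SucE)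
    case (edge p a b)
    then have len: "length (map \<phi> p) = n"
      by simp
    from assms(2) \<open>(a, b) \<in> Edg R\<close> show ?thesis
      unfolding edge(1,2,5)
      by (rule igs_mapping_edgeE) (simp_all add: gm_typ_snoc_edge[OF len])
  next
    case (glue p a q b)
    from Suc.IH[OF glue(3)] show ?thesis
    proof (elim disjE exE conjE)
      assume "map \<phi> p = map \<phi> q" and collapse: "\<forall>(a', b') \<in> Glue R t. \<phi> a' = \<phi> b'"
      moreover have "\<phi> a = \<phi> b"
        using bspec[OF collapse glue(4)] by simp
      ultimately show ?thesis
        unfolding glue(1,2) by simp
    next
      fix t' assume image: "gm_typ R' n (map \<phi> p) (map \<phi> q) = Some t'"
        and glue_image: "\<forall>(a', b') \<in> Glue R t. (\<phi> a', \<phi> b') \<in> Glue R' t'"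
      have "gm_typ R' (Suc n) (map \<phi> (p @ [a])) (map \<phi> (q @ [b])) = Some t'"
        using gm_typ_snoc_glue[OF assms(1) image] bspec[OF glue_image glue(4)] by simp
      with glue_image show ?thesis
        unfolding glue(1,2) by blast
    next
      fix t' assume image: "gm_typ R' n (map \<phi> q) (map \<phi> p) = Some t'"
        and glue_image: "\<forall>(a', b') \<in> Glue R t. (\<phi> b', \<phi> a') \<in> Glue R' t'"
      have "gm_typ R' (Suc n) (map \<phi> (q @ [b])) (map \<phi> (p @ [a])) = Some t'"
        using gm_typ_snoc_glue[OF assms(1) image] bspec[OF glue_image glue(4)] by simp
      with glue_image show ?thesis
        unfolding glue(1,2) by blast
    qed
  qed
qed simp

lemma igs_mapping_graph_mapping:
  assumes "irrefl (Edg R')" and "igs_mapping R R' \<phi>"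
  shows "graph_mapping (words R n) (gm_edges R n) (words R' n) (gm_edges R' n) (map \<phi>)"
proof -
  have "\<phi> ` Sym R \<subseteq> Sym R'"
    using assms(2) unfolding igs_mapping_def graph_mapping_def by blast
  then have "map \<phi> ` words R n \<subseteq> words R' n"
    unfolding words_def by force
  moreover have "map \<phi> x = map \<phi> y \<or> (map \<phi> x, map \<phi> y) \<in> gm_edges R' n \<or>
      (map \<phi> y, map \<phi> x) \<in> gm_edges R' n" if "(x, y) \<in> gm_edges R n" for x y
    using that igs_mapping_gm_typ[OF assms] unfolding gm_edges_def by fastforce
  ultimately show ?thesis
    unfolding graph_mapping_def by blast
qed

lemma sub_system_edge:
  assumes "sub_system R R'" and "irrefl (Edg R)" and "(a, b) \<in> Edg R"
  shows "(a, b) \<in> Edg R' \<and> Glue R (Typing R (a, b)) \<subseteq> Glue R' (Typing R' (a, b)) \<or>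
    (b, a) \<in> Edg R' \<and> (Glue R (Typing R (a, b)))\<inverse> \<subseteq> Glue R' (Typing R' (b, a))"
proof -
  from assms(1) have "igs_mapping R R' id"
    by (simp add: sub_system_def)
  from this assms(3) show ?thesis
  proof (rule igs_mapping_edgeE)
    assume "id a = id b"
    with assms(2,3) show ?thesis
      by (simp add: irrefl_def)
  qed auto
qed

section \<open>Cells of a cubical IGS and the folding\<close>

definition cell_coord :: "nat \<Rightarrow> nat \<Rightarrow> csym list \<Rightarrow> nat" where
  "cell_coord L j p = foldl (\<lambda>k a. k * L + (fst a ! j - 1)) 0 p"

definition cell_step :: "nat \<Rightarrow> nat \<Rightarrow> nat \<Rightarrow> csym list \<Rightarrow> csym list \<Rightarrow> bool" where
  "cell_step d L j p q \<longleftrightarrow>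
     (\<forall>i<d. i \<noteq> j \<longrightarrow> cell_coord L i q = cell_coord L i p) \<and>
     cell_coord L j q = Suc (cell_coord L j p)"

lemma cell_coord_snoc: "cell_coord L j (p @ [a]) = cell_coord L j p * L + (fst a ! j - 1)"
  by (simp add: cell_coord_def)

lemma cube_typing:
  assumes "j < d" "\<forall>i<d. i \<noteq> j \<longrightarrow> fst b ! i = fst a ! i" "fst b ! j = fst a ! j + 1"
  shows "Typing (cube_igs d L s) (a, b) = j"
  unfolding cube_igs_def using assms by (auto intro!: the_equality)

lemma cube_edge_cell_step:
  assumes "(a, b) \<in> Edg (cube_igs d L s)"
  shows "Typing (cube_igs d L s) (a, b) < d \<and>
    cell_step d L (Typing (cube_igs d L s) (a, b)) (p @ [a]) (p @ [b])"
proof -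
  from assms obtain j where j: "j < d" "\<forall>i<d. i \<noteq> j \<longrightarrow> fst b ! i = fst a ! i"
      "fst b ! j = fst a ! j + 1" and "a \<in> cube_sym d L s"
    unfolding cube_igs_def by auto
  then have "fst a ! j \<ge> 1"
    unfolding cube_sym_def by auto
  with j show ?thesis
    by (simp add: cube_typing cell_step_def cell_coord_snoc)
qed

lemma cube_glue_cell_step:
  assumes "L \<ge> 1" and "(a, b) \<in> Glue (cube_igs d L s) j" and "cell_step d L j p q"
  shows "cell_step d L j (p @ [a]) (q @ [b])"
  using assms unfolding cell_step_def cube_igs_def by (auto simp: cell_coord_snoc algebra_simps)

lemma gm_typ_cell_step:
  assumes "sub_system R (cube_igs d L s)" "irrefl (Edg R)" "L \<ge> 1"
  shows "gm_typ R m p q = Some t \<Longrightarrow> \<exists>j<d.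
    cell_step d L j p q \<and> Glue R t \<subseteq> Glue (cube_igs d L s) j \<or>
    cell_step d L j q p \<and> (Glue R t)\<inverse> \<subseteq> Glue (cube_igs d L s) j"
proof (induction m arbitrary: p q t)
  case (Suc m)
  from Suc.prems show ?case
  proof (cases rule: gm_typ_SucE)
    case (edge p' a b)
    then show ?thesis
      using sub_system_edge[OF assms(1,2) edge(4)] cube_edge_cell_step by metis
  next
    case (glue p' a q' b)
    then show ?thesis
      using Suc.IH[OF glue(3)] cube_glue_cell_step[OF assms(3)] by blast
  qed
qed simp

lemma cubical_igsD:
  assumes "cubical_igs d L s R"
  shows "igs_wf R" and "sub_system R (cube_igs d L s)"
    and "\<alpha> \<in> cube_group d L \<Longrightarrow> igs_iso R R \<alpha>"
  using assms unfolding cubical_igs_def by (elim conjE; blast)+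

definition reflect :: "nat \<Rightarrow> nat set \<Rightarrow> csym \<Rightarrow> csym" where
  "reflect L A = (\<lambda>(c, \<sigma>). (map (\<lambda>i. if i \<in> A then L + 1 - c ! i else c ! i) [0..<length c], \<sigma>))"

lemma reflect_empty: "reflect L {} = id"
  by (auto simp: reflect_def fun_eq_iff map_nth)

lemma reflect_insert:
  assumes "j \<notin> A"
  shows "reflect L (insert j A) = eta_map L j \<circ> reflect L A"
proof
  fix a :: csym
  obtain c \<sigma> where "a = (c, \<sigma>)"
    by fastforce
  then show "reflect L (insert j A) a = (eta_map L j \<circ> reflect L A) a"
    using assms unfolding reflect_def eta_map_def
    by (cases "j < length c") (auto simp: nth_list_update intro!: nth_equalityI)
qed

lemma reflect_graph_mapping:
  assumes "cubical_igs d L s R" and "A \<subseteq> {..<d}"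
  shows "graph_mapping (words R n) (gm_edges R n) (words R n) (gm_edges R n) (map (reflect L A))"
proof -
  have "finite A"
    using assms(2) finite_subset by blast
  then show ?thesis
    using assms(2)
  proof (induction A rule: finite_induct)
    case empty
    show ?case
      unfolding reflect_empty list.map_id0 by (rule graph_mapping_id)
  next
    case (insert j A)
    have "eta_map L j \<in> cube_group d L"
      using insert.prems unfolding cube_group_def by blast
    then have "igs_mapping R R (eta_map L j)"
      using cubical_igsD(3)[OF assms(1)] unfolding igs_iso_def by blast
    then have "graph_mapping (words R n) (gm_edges R n) (words R n) (gm_edges R n)
        (map (eta_map L j))"
      using igs_mapping_graph_mapping igs_wf_irrefl[OF cubical_igsD(1)[OF assms(1)]] by blast
    moreover have "map (reflect L (insert j A)) = map (eta_map L j) \<circ> map (reflect L A)"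
      using insert.hyps(2) by (simp add: reflect_insert)
    ultimately show ?case
      using graph_mapping_comp insert.IH insert.prems by fastforce
  qed
qed

lemma reflect_glue:
  assumes "(a, b) \<in> Glue (cube_igs d L s) j" and "\<forall>i. (i \<in> A \<longleftrightarrow> i \<in> B) \<longleftrightarrow> i \<noteq> j"
  shows "reflect L A a = reflect L B b"
proof -
  obtain c c' \<sigma> where ab: "a = (c, \<sigma>)" "b = (c', \<sigma>)" "length c = d" "length c' = d"
    and c: "\<forall>i<d. i \<noteq> j \<longrightarrow> c ! i = c' ! i" "c ! j = L" "c' ! j = 1"
    using assms(1) unfolding cube_igs_def cube_sym_def by auto
  have "(if i \<in> A then L + 1 - c ! i else c ! i) = (if i \<in> B then L + 1 - c' ! i else c' ! i)"
    if "i < d" for i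
    using assms(2) c that by (cases "i = j") auto
  then show ?thesis
    unfolding ab reflect_def using ab(3,4) by simp
qed

definition flip_dirs :: "nat \<Rightarrow> nat \<Rightarrow> csym list \<Rightarrow> csym list \<Rightarrow> nat set" where
  "flip_dirs d L w p = {i. i < d \<and> odd (cell_coord L i p) \<noteq> odd (cell_coord L i w)}"

lemma flip_dirs_subset: "flip_dirs d L w p \<subseteq> {..<d}"
  by (auto simp: flip_dirs_def)

lemma cell_step_flip_dirs:
  assumes "j < d" and "cell_step d L j p q"
  shows "\<forall>i. (i \<in> flip_dirs d L w p \<longleftrightarrow> i \<in> flip_dirs d L w q) \<longleftrightarrow> i \<noteq> j"
  using assms unfolding flip_dirs_def cell_step_def by auto

lemma gm_typ_glue_reflect:
  assumes "cubical_igs d L s R" and "L \<ge> 1"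
    and "gm_typ R m p q = Some t" and "(a, b) \<in> Glue R t"
  shows "reflect L (flip_dirs d L w p) a = reflect L (flip_dirs d L w q) b"
proof -
  have "sub_system R (cube_igs d L s)" "irrefl (Edg R)"
    using cubical_igsD(1,2)[OF assms(1)] igs_wf_irrefl by blast+
  from gm_typ_cell_step[OF this assms(2,3)] obtain j where "j < d" and
    "cell_step d L j p q \<and> Glue R t \<subseteq> Glue (cube_igs d L s) j \<or>
     cell_step d L j q p \<and> (Glue R t)\<inverse> \<subseteq> Glue (cube_igs d L s) j"
    by blast
  then show ?thesis
  proof (elim disjE conjE)
    assume step: "cell_step d L j p q" and "Glue R t \<subseteq> Glue (cube_igs d L s) j"
    then have "(a, b) \<in> Glue (cube_igs d L s) j"
      using assms(4) by blast
    from reflect_glue[OF this cell_step_flip_dirs[OF \<open>j < d\<close> step]] show ?thesis .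
  next
    assume step: "cell_step d L j q p" and "(Glue R t)\<inverse> \<subseteq> Glue (cube_igs d L s) j"
    then have "(b, a) \<in> Glue (cube_igs d L s) j"
      using assms(4) by blast
    from reflect_glue[OF this cell_step_flip_dirs[OF \<open>j < d\<close> step]] show ?thesis ..
  qed
qed

definition fold_onto_cell :: "nat \<Rightarrow> nat \<Rightarrow> csym list \<Rightarrow> csym list \<Rightarrow> csym list" where
  "fold_onto_cell d L w u = w @ map (reflect L (flip_dirs d L w (take (length w) u))) (drop (length w) u)"

lemma fold_onto_cell_append:
  "length p = length w \<Longrightarrow> fold_onto_cell d L w (p @ x) = w @ map (reflect L (flip_dirs d L w p)) x"
  by (simp add: fold_onto_cell_def)

lemma fold_onto_cell_fixes: "fold_onto_cell d L w (w @ x) = w @ x"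
  by (simp add: fold_onto_cell_append flip_dirs_def reflect_empty)

lemma fold_onto_cell_words:
  assumes "cubical_igs d L s R" and "u \<in> words R (n + length w)"
  shows "fold_onto_cell d L w u \<in> {w @ x | x. x \<in> words R n}"
proof -
  have "drop (length w) u \<in> words R n"
    using assms(2) unfolding words_def by (auto dest: in_set_dropD)
  then have "map (reflect L (flip_dirs d L w (take (length w) u))) (drop (length w) u) \<in> words R n"
    by (rule graph_mapping_imageD[OF reflect_graph_mapping[OF assms(1) flip_dirs_subset]])
  then show ?thesis
    by (simp add: fold_onto_cell_def)
qed

lemma fold_onto_cell_edge:
  assumes "cubical_igs d L s R" and "L \<ge> 1" and "(u, v) \<in> gm_edges R (length w + n)"
  shows "fold_onto_cell d L w u = fold_onto_cell d L w v \<or>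
    (fold_onto_cell d L w u, fold_onto_cell d L w v) \<in> gm_edges R (length w + n) \<or>
    (fold_onto_cell d L w v, fold_onto_cell d L w u) \<in> gm_edges R (length w + n)"
proof -
  have irr: "irrefl (Edg R)"
    using cubical_igsD(1)[OF assms(1)] by (rule igs_wf_irrefl)
  obtain t where t: "gm_typ R (length w + n) u v = Some t"
    using assms(3) unfolding gm_edges_def by auto
  define F G where "F = reflect L (flip_dirs d L w (take (length w) u))"
    and "G = reflect L (flip_dirs d L w (take (length w) v))"
  have fold: "fold_onto_cell d L w u = w @ map F (drop (length w) u)"
      "fold_onto_cell d L w v = w @ map G (drop (length w) v)"
    unfolding fold_onto_cell_def F_def G_def by simp_all
  from irr t show ?thesis
  proof (cases rule: gm_typ_add_cases)
    case same_cell
    have "(drop (length w) u, drop (length w) v) \<in> gm_edges R n"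
      using same_cell(2) by (simp add: gm_edges_def)
    then have "map F (drop (length w) u) = map F (drop (length w) v) \<or>
        (map F (drop (length w) u), map F (drop (length w) v)) \<in> gm_edges R n \<or>
        (map F (drop (length w) v), map F (drop (length w) u)) \<in> gm_edges R n"
      unfolding F_def
      by (rule graph_mapping_edgeD[OF reflect_graph_mapping[OF assms(1) flip_dirs_subset]])
    moreover have "G = F"
      unfolding F_def G_def same_cell(1) ..
    ultimately show ?thesis
      unfolding fold using gm_edges_append_prefix[OF irr] by auto
  next
    case glued
    have "F a = G b" if "(a, b) \<in> Glue R t" for a b
      using gm_typ_glue_reflect[OF assms(1,2) glued(1) that] unfolding F_def G_def .
    with glued(2) have "map F (drop (length w) u) = map G (drop (length w) v)"
      by (induction rule: list_all2_induct) auto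
    then show ?thesis
      unfolding fold by simp
  qed
qed

theorem proposition4p5:
  fixes d L s n :: nat and R :: "(csym, nat) igs" and w :: "csym list"
  assumes "d \<ge> 1" and "s \<ge> 1" and "L \<ge> 3"
    and "cubical_igs d L s R"
    and "w \<in> words_all R"
  shows "\<exists>\<phi>. folding (words R (n + length w)) (gm_edges R (n + length w))
                    {w @ u | u. u \<in> words R n} \<phi>"
proof -
  let ?V = "words R (n + length w)" and ?E = "gm_edges R (n + length w)"
    and ?U = "{w @ u | u. u \<in> words R n}"
  \<comment> \<open>\<open>gm_edges\<close> also joins lists with letters outside \<open>Sym R\<close> (the recursion never inspects
    the common prefix of an edge inside a cell), so \<open>\<phi>\<close> is made constant off the vertex set.\<close>
  define \<phi> where "\<phi> u = (if u \<in> ?V then fold_onto_cell d L w u else undefined)" for u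
  have "L \<ge> 1" and "igs_wf R"
    using assms(3) cubical_igsD(1)[OF assms(4)] by auto
  have "?U \<subseteq> ?V"
    using assms(5) unfolding words_all_def words_def by auto
  moreover have "\<phi> ` ?V \<subseteq> ?U"
    using fold_onto_cell_words[OF assms(4)] unfolding \<phi>_def by auto
  moreover have "\<phi> u = \<phi> v \<or> (\<phi> u, \<phi> v) \<in> ?E \<inter> ?U \<times> ?U \<or> (\<phi> v, \<phi> u) \<in> ?E \<inter> ?U \<times> ?U"
    if "(u, v) \<in> ?E" for u v
    using that fold_onto_cell_edge[OF assms(4) \<open>L \<ge> 1\<close>, of u v w n]
      gm_edges_words_iff[OF \<open>igs_wf R\<close> that] fold_onto_cell_words[OF assms(4)]
    unfolding \<phi>_def by (auto simp: add.commute)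
  moreover have "\<phi> x = x" if "x \<in> ?U" for x
    using that \<open>?U \<subseteq> ?V\<close> fold_onto_cell_fixes unfolding \<phi>_def by auto
  ultimately have "folding ?V ?E ?U \<phi>"
    unfolding folding_def graph_mapping_def by blast
  then show ?thesis
    by blast
qed

end
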